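(* Let $\alpha=(\alpha_n)_{n\in\mathbb{N}}\in\ell^2$. The Rhaly operator $R_\alpha$ is compact on $\ell^2$ if and only if $\lim_{k\to\infty}\sigma_k=0$.
   Context: $\mathbb{N}=\{0,1,2,\dots\}$; $\ell^2$ is the space of square-summable functions $\mathbb{N}\to\mathbb{C}$. The Rhaly operator is $(R_\alpha f)(k)=\alpha_k\sum_{j=0}^k f(j)$. For $k\in\mathbb{N}$, $\sigma_k=\big(\sum_{j=2^k}^{2^{k+1}-1}(j+1)|\alpha_j|^2\big)^{1/2}$. *)

theory Defs
  imports "HOL-Analysis.Analysis"
begin

definition in_l2 :: "(nat \<Rightarrow> complex) \<Rightarrow> bool" where
  "in_l2 f \<longleftrightarrow> summable (\<lambda>n. (cmod (f n))\<^sup>2)"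

definition l2_norm :: "(nat \<Rightarrow> complex) \<Rightarrow> real" where
  "l2_norm f = sqrt (\<Sum>n. (cmod (f n))\<^sup>2)"

definition rhaly :: "(nat \<Rightarrow> complex) \<Rightarrow> (nat \<Rightarrow> complex) \<Rightarrow> (nat \<Rightarrow> complex)" where
  "rhaly \<alpha> f = (\<lambda>k. \<alpha> k * (\<Sum>j\<le>k. f j))"

definition compact_op_l2 :: "((nat \<Rightarrow> complex) \<Rightarrow> (nat \<Rightarrow> complex)) \<Rightarrow> bool" where
  "compact_op_l2 T \<longleftrightarrow>
     (\<forall>f. in_l2 f \<longrightarrow> in_l2 (T f)) \<and>
     (\<forall>x :: nat \<Rightarrow> nat \<Rightarrow> complex. (\<forall>n. in_l2 (x n)) \<and> (\<exists>B. \<forall>n. l2_norm (x n) \<le> B) \<longrightarrow>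
        (\<exists>r g. strict_mono r \<and> in_l2 g \<and>
               (\<lambda>n. l2_norm (T (x (r n)) - g)) \<longlonglongrightarrow> 0))"

definition sigma :: "(nat \<Rightarrow> complex) \<Rightarrow> nat \<Rightarrow> real" where
  "sigma \<alpha> k = sqrt (\<Sum>j = 2^k..2^(k+1) - 1. real (j + 1) * (cmod (\<alpha> j))\<^sup>2)"

end

theory Submission
  imports Defs "HOL-Library.Diagonal_Subsequence"
begin

(* If sigma_m^2 <= eps for all m >= M, the weighted Cauchy-Schwarz inequality
     |sum_{j<=k} d_j|^2 <= 2 sqrt(k+1) sum_{j<=k} sqrt(j+1) |d_j|^2
   and the dyadic tail estimate
     sum_{k>=L} sqrt(k+1) |alpha_k|^2 <= 4 sqrt 2 eps / sqrt(L+1)      (L >= 2^M)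
   show that the rows k >= 2^M of R_alpha contribute at most 8 sqrt 2 eps ||d||^2 to
   ||R_alpha d||^2.  Hence R_alpha is bounded when sigma is, and when sigma tends to 0 it
   maps bounded coordinatewise null sequences to norm null ones: the finitely many rows
   below 2^M converge, the others are uniformly small.  A diagonal argument supplies
   coordinatewise convergent subsequences of bounded sequences, whence compactness.
   Conversely, the unit vectors f_k = 2^(-k/2) 1_[0,2^k) are coordinatewise null, so a
   compact R_alpha maps them to a norm null sequence; but the partial sums of f_k equal
   2^(k/2) on the block [2^k, 2^(k+1)), which gives sigma_k <= sqrt 2 ||R_alpha f_k||.
   Neither direction uses the hypothesis alpha : l2. *)

section \<open>Sequences in l2\<close>

lemma cmod_diff_sq_le: "(cmod (a - b))\<^sup>2 \<le> 2 * (cmod a)\<^sup>2 + 2 * (cmod b)\<^sup>2"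
proof -
  have "(cmod (a - b))\<^sup>2 \<le> (cmod a + cmod b)\<^sup>2"
    by (intro power_mono norm_triangle_ineq4) auto
  also have "\<dots> \<le> 2 * (cmod a)\<^sup>2 + 2 * (cmod b)\<^sup>2"
    using sum_squares_bound[of "cmod a" "cmod b"] by (simp add: power2_sum)
  finally show ?thesis .
qed

lemma in_l2_diff: "in_l2 f \<Longrightarrow> in_l2 g \<Longrightarrow> in_l2 (f - g)"
  unfolding in_l2_def
  by (rule summable_comparison_test[of _ "\<lambda>n. 2 * (cmod (f n))\<^sup>2 + 2 * (cmod (g n))\<^sup>2"])
     (auto intro: summable_add summable_mult simp: cmod_diff_sq_le)

lemma in_l2_if_partial_sums_bounded:
  assumes "\<And>K. (\<Sum>j\<le>K. (cmod (f j))\<^sup>2) \<le> C"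
  shows "in_l2 f"
  unfolding in_l2_def by (rule bounded_imp_summable) (use assms in auto)

lemma l2_norm_sq: "in_l2 f \<Longrightarrow> (l2_norm f)\<^sup>2 = (\<Sum>j. (cmod (f j))\<^sup>2)"
  unfolding in_l2_def l2_norm_def by (simp add: suminf_nonneg)

lemma l2_norm_nonneg: "in_l2 f \<Longrightarrow> 0 \<le> l2_norm f"
  unfolding in_l2_def l2_norm_def by (simp add: suminf_nonneg)

lemma sum_le_l2_norm_sq:
  assumes "in_l2 f" "finite A"
  shows "(\<Sum>j\<in>A. (cmod (f j))\<^sup>2) \<le> (l2_norm f)\<^sup>2"
  using assms unfolding l2_norm_sq[OF assms(1)] in_l2_def by (intro sum_le_suminf) auto

lemma l2_norm_sq_le:
  assumes "in_l2 f" "\<And>K. (\<Sum>j\<le>K. (cmod (f j))\<^sup>2) \<le> C"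
  shows "(l2_norm f)\<^sup>2 \<le> C"
proof -
  have "(\<Sum>j. (cmod (f j))\<^sup>2) \<le> C"
  proof (rule suminf_le_const)
    show "summable (\<lambda>j. (cmod (f j))\<^sup>2)"
      using assms(1) by (simp add: in_l2_def)
    show "(\<Sum>j<K. (cmod (f j))\<^sup>2) \<le> C" for K
      using sum_mono2[of "{..K}" "{..<K}" "\<lambda>j. (cmod (f j))\<^sup>2"] assms(2)[of K] by force
  qed
  then show ?thesis
    using l2_norm_sq[OF assms(1)] by simp
qed

lemma norm_le_l2_norm:
  assumes "in_l2 f"
  shows "cmod (f j) \<le> l2_norm f"
  using sum_le_l2_norm_sq[OF assms, of "{j}"] l2_norm_nonneg[OF assms]
  by (auto intro: power2_le_imp_le)

lemma sum_diff_sq_le: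
  assumes "in_l2 f" "l2_norm f \<le> B" "\<And>K. (\<Sum>j\<le>K. (cmod (g j))\<^sup>2) \<le> B\<^sup>2"
  shows "(\<Sum>j\<le>K. (cmod ((f - g) j))\<^sup>2) \<le> 4 * B\<^sup>2"
proof -
  have "(\<Sum>j\<le>K. (cmod ((f - g) j))\<^sup>2) \<le> (\<Sum>j\<le>K. 2 * (cmod (f j))\<^sup>2 + 2 * (cmod (g j))\<^sup>2)"
    unfolding fun_diff_def by (rule sum_mono) (rule cmod_diff_sq_le)
  also have "\<dots> = 2 * (\<Sum>j\<le>K. (cmod (f j))\<^sup>2) + 2 * (\<Sum>j\<le>K. (cmod (g j))\<^sup>2)"
    by (simp add: sum.distrib sum_distrib_left)
  also have "\<dots> \<le> 2 * (l2_norm f)\<^sup>2 + 2 * B\<^sup>2"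
    using sum_le_l2_norm_sq[OF assms(1), of "{..K}"] assms(3)[of K] by simp
  also have "\<dots> \<le> 4 * B\<^sup>2"
    using power_mono[OF assms(2) l2_norm_nonneg[OF assms(1)], of 2] by simp
  finally show ?thesis .
qed

section \<open>A weighted Hardy inequality for the Rhaly operator\<close>

lemma sum_inverse_sqrt_le: "(\<Sum>j\<le>k. 1 / sqrt (real j + 1)) \<le> 2 * sqrt (real k + 1)"
proof (induction k)
  case 0
  then show ?case by simp
next
  case (Suc k)
  define s t where "s = sqrt (real k + 1)" and "t = sqrt (real k + 2)"
  have "t > 0" "s\<^sup>2 = real k + 1" "t\<^sup>2 = real k + 2"
    unfolding s_def t_def by auto
  then have "2 * s * t + 1 \<le> 2 * t\<^sup>2"
    using sum_squares_bound[of s t] by simp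
  then have "(2 * s + 1 / t) * t \<le> 2 * t * t"
    using \<open>t > 0\<close> by (simp add: distrib_right power2_eq_square)
  then have "2 * s + 1 / t \<le> 2 * t"
    using \<open>t > 0\<close> by (metis mult_le_cancel_right_pos)
  moreover have "(\<Sum>j\<le>Suc k. 1 / sqrt (real j + 1)) = (\<Sum>j\<le>k. 1 / sqrt (real j + 1)) + 1 / t"
    by (simp add: t_def add.commute add.left_commute)
  ultimately show ?case
    using Suc by (simp add: s_def t_def add.commute add.left_commute)
qed

lemma norm_sum_sq_le_weighted:
  fixes d :: "nat \<Rightarrow> complex"
  shows "(cmod (\<Sum>j\<le>k. d j))\<^sup>2
           \<le> 2 * sqrt (real k + 1) * (\<Sum>j\<le>k. sqrt (real j + 1) * (cmod (d j))\<^sup>2)"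
proof -
  define u where "u j = sqrt (sqrt (real j + 1)) * cmod (d j)" for j
  define v where "v j = 1 / sqrt (sqrt (real j + 1))" for j
  have "(cmod (\<Sum>j\<le>k. d j))\<^sup>2 \<le> (\<Sum>j\<le>k. cmod (d j))\<^sup>2"
    by (intro power_mono norm_sum) auto
  also have "\<dots> = (\<Sum>j\<le>k. u j * v j)\<^sup>2"
    by (simp add: u_def v_def)
  also have "\<dots> \<le> (\<Sum>j\<le>k. (u j)\<^sup>2) * (\<Sum>j\<le>k. (v j)\<^sup>2)"
    by (rule Cauchy_Schwarz_ineq_sum)
  also have "\<dots> = (\<Sum>j\<le>k. sqrt (real j + 1) * (cmod (d j))\<^sup>2) * (\<Sum>j\<le>k. 1 / sqrt (real j + 1))"
    by (simp add: u_def v_def power_mult_distrib power_divide)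
  also have "\<dots> \<le> (\<Sum>j\<le>k. sqrt (real j + 1) * (cmod (d j))\<^sup>2) * (2 * sqrt (real k + 1))"
    by (intro mult_left_mono sum_inverse_sqrt_le sum_nonneg) auto
  finally show ?thesis
    by (simp add: mult_ac)
qed

lemma sum_mult_partial_sums_swap:
  fixes a b :: "nat \<Rightarrow> 'a::comm_semiring_0"
  shows "(\<Sum>k=L..K. a k * (\<Sum>j\<le>k. b j)) = (\<Sum>j\<le>K. b j * (\<Sum>k=max j L..K. a k))"
proof -
  have "(\<Sum>k=L..K. a k * (\<Sum>j\<le>k. b j)) = (\<Sum>k=L..K. \<Sum>j\<in>{j. j \<in> {..K} \<and> j \<le> k}. a k * b j)"
  proof (rule sum.cong[OF refl])
    fix k assume "k \<in> {L..K}"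
    then have "{j. j \<in> {..K} \<and> j \<le> k} = {..k}" by auto
    then show "a k * (\<Sum>j\<le>k. b j) = (\<Sum>j\<in>{j. j \<in> {..K} \<and> j \<le> k}. a k * b j)"
      by (simp add: sum_distrib_left)
  qed
  also have "\<dots> = (\<Sum>j\<le>K. \<Sum>k\<in>{k. k \<in> {L..K} \<and> j \<le> k}. a k * b j)"
    by (rule sum.swap_restrict) auto
  also have "\<dots> = (\<Sum>j\<le>K. b j * (\<Sum>k=max j L..K. a k))"
  proof (rule sum.cong[OF refl])
    fix j
    have "{k. k \<in> {L..K} \<and> j \<le> k} = {max j L..K}" by auto
    then show "(\<Sum>k\<in>{k. k \<in> {L..K} \<and> j \<le> k}. a k * b j) = b j * (\<Sum>k=max j L..K. a k)"
      by (simp add: sum_distrib_left mult.commute)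
  qed
  finally show ?thesis .
qed

lemma sigma_nonneg: "0 \<le> sigma \<alpha> m"
  unfolding sigma_def by (intro real_sqrt_ge_zero sum_nonneg) auto

lemma sigma_sq: "(sigma \<alpha> m)\<^sup>2 = (\<Sum>j=2^m..<2^(m+1). real (j + 1) * (cmod (\<alpha> j))\<^sup>2)"
proof -
  have "{2^m..2^(m+1) - 1} = {(2::nat)^m..<2^(m+1)}"
    by (metis Suc_pred' atLeastLessThanSuc_atLeastAtMost pos2 zero_less_power)
  then show ?thesis
    unfolding sigma_def by (simp add: sum_nonneg)
qed

lemma sum_dyadic_block_le:
  "(\<Sum>k=2^m..<2^(m+1). (cmod (\<alpha> k))\<^sup>2 * sqrt (real k + 1)) \<le> (sigma \<alpha> m)\<^sup>2 / sqrt (2^m)"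
proof -
  have "sqrt (real k + 1) \<le> real (k + 1) / sqrt (2^m)" if "2^m \<le> k" for k
  proof -
    have "(2::real)^m \<le> real k + 1"
      using that by (metis le_SucI numeral_power_le_of_nat_cancel_iff of_nat_Suc add.commute)
    then have "sqrt (real k + 1) * sqrt (2^m) \<le> sqrt (real k + 1) * sqrt (real k + 1)"
      by (intro mult_left_mono real_sqrt_le_mono) auto
    then show ?thesis
      by (simp add: field_simps)
  qed
  then have "(\<Sum>k=2^m..<2^(m+1). (cmod (\<alpha> k))\<^sup>2 * sqrt (real k + 1))
      \<le> (\<Sum>k=2^m..<2^(m+1). (cmod (\<alpha> k))\<^sup>2 * (real (k + 1) / sqrt (2^m)))"
    by (intro sum_mono mult_left_mono) auto
  also have "\<dots> = (sigma \<alpha> m)\<^sup>2 / sqrt (2^m)"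
    by (simp add: sigma_sq sum_divide_distrib mult.commute)
  finally show ?thesis .
qed

lemma sum_dyadic_range_le:
  assumes small: "\<And>m. M \<le> m \<Longrightarrow> (sigma \<alpha> m)\<^sup>2 \<le> \<epsilon>" and "M \<le> m"
  shows "(\<Sum>k=2^m..<2^(m+n). (cmod (\<alpha> k))\<^sup>2 * sqrt (real k + 1)) \<le> 4 * \<epsilon> / sqrt (2^m)"
proof -
  have "0 \<le> \<epsilon>"
    by (rule order.trans[OF zero_le_power2 small[OF order_refl]])
  show ?thesis
    using \<open>M \<le> m\<close>
  proof (induction n arbitrary: m)
    case 0
    show ?case
      using \<open>0 \<le> \<epsilon>\<close> by simp
  next
    case (Suc n)
    let ?f = "\<lambda>k. (cmod (\<alpha> k))\<^sup>2 * sqrt (real k + 1)"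
    define q where "q = sqrt ((2::real)^m)"
    have "0 < q" "sqrt (2^(m+1)) = sqrt 2 * q"
      unfolding q_def by (simp_all add: real_sqrt_mult)
    have "(2::nat)^m \<le> 2^(m+1)" "(2::nat)^(m+1) \<le> 2^(m+1+n)"
      by (auto intro: power_increasing)
    then have "(\<Sum>k=2^m..<2^(m+Suc n). ?f k) = (\<Sum>k=2^m..<2^(m+1). ?f k) + (\<Sum>k=2^(m+1)..<2^(m+1+n). ?f k)"
      by (simp add: sum.atLeastLessThan_concat)
    also have "\<dots> \<le> \<epsilon> / q + 4 * \<epsilon> / (sqrt 2 * q)"
    proof (rule add_mono)
      show "(\<Sum>k=2^m..<2^(m+1). ?f k) \<le> \<epsilon> / q"
        using sum_dyadic_block_le[of \<alpha> m] small[OF Suc.prems] \<open>0 < q\<close>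
        unfolding q_def by (meson divide_right_mono order.trans less_imp_le)
      show "(\<Sum>k=2^(m+1)..<2^(m+1+n). ?f k) \<le> 4 * \<epsilon> / (sqrt 2 * q)"
        using Suc.IH[of "m+1"] Suc.prems \<open>sqrt (2^(m+1)) = sqrt 2 * q\<close> by simp
    qed
    also have "\<dots> \<le> 4 * \<epsilon> / q"
    proof -
      have "4 / sqrt 2 \<le> 3"
        using real_le_rsqrt[of "4/3" 2] by (simp add: field_simps power2_eq_square)
      then have "\<epsilon> + \<epsilon> * (4 / sqrt 2) \<le> 4 * \<epsilon>"
        using mult_left_mono[of "4 / sqrt 2" 3 \<epsilon>] \<open>0 \<le> \<epsilon>\<close> by simp
      then have "(\<epsilon> + \<epsilon> * (4 / sqrt 2)) / q \<le> 4 * \<epsilon> / q"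
        using \<open>0 < q\<close> by (intro divide_right_mono) auto
      moreover have "(\<epsilon> + \<epsilon> * (4 / sqrt 2)) / q = \<epsilon> / q + 4 * \<epsilon> / (sqrt 2 * q)"
        by (simp add: add_divide_distrib divide_divide_eq_left mult.commute)
      ultimately show ?thesis by simp
    qed
    finally show ?case
      by (simp add: q_def)
  qed
qed

lemma sum_tail_le:
  assumes small: "\<And>m. M \<le> m \<Longrightarrow> (sigma \<alpha> m)\<^sup>2 \<le> \<epsilon>" and "2^M \<le> L"
  shows "(\<Sum>k=L..K. (cmod (\<alpha> k))\<^sup>2 * sqrt (real k + 1)) \<le> 4 * sqrt 2 * \<epsilon> / sqrt (real L + 1)"
proof -
  have "0 \<le> \<epsilon>"
    by (rule order.trans[OF zero_le_power2 small[OF order_refl]])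
  have "1 \<le> L"
    using \<open>2^M \<le> L\<close> by (metis le_trans one_le_power one_le_numeral)
  then obtain m where m: "2^m \<le> L" "L < 2^(m+1)"
    using ex_power_ivl1[of 2 L] by auto
  have "M \<le> m"
    using m(2) \<open>2^M \<le> L\<close> power_increasing[of "m+1" M "2::nat"] by linarith
  have "K < 2^(m+(K+1))"
    using less_exp[of K] power_increasing[of K "m+(K+1)" "2::nat"] by linarith
  then have "(\<Sum>k=L..K. (cmod (\<alpha> k))\<^sup>2 * sqrt (real k + 1))
      \<le> (\<Sum>k=2^m..<2^(m+(K+1)). (cmod (\<alpha> k))\<^sup>2 * sqrt (real k + 1))"
    using m(1) by (intro sum_mono2) auto
  also have "\<dots> \<le> 4 * \<epsilon> / sqrt (2^m)"
    by (rule sum_dyadic_range_le[OF small \<open>M \<le> m\<close>])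
  also have "\<dots> = 4 * sqrt 2 * \<epsilon> / sqrt (2 * 2^m)"
    by (simp add: real_sqrt_mult)
  also have "\<dots> \<le> 4 * sqrt 2 * \<epsilon> / sqrt (real L + 1)"
  proof (rule divide_left_mono)
    have "real L + 1 \<le> 2 * 2^m"
      using m(2) by (metis Suc_leI add.commute of_nat_Suc of_nat_le_iff of_nat_numeral
          of_nat_power power_Suc Suc_eq_plus1)
    then show "sqrt (real L + 1) \<le> sqrt (2 * 2^m)"
      by (rule real_sqrt_le_mono)
  qed (use \<open>0 \<le> \<epsilon>\<close> in auto)
  finally show ?thesis .
qed

lemma norm_rhaly_sq: "(cmod (rhaly \<alpha> d k))\<^sup>2 = (cmod (\<alpha> k))\<^sup>2 * (cmod (\<Sum>j\<le>k. d j))\<^sup>2"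
  by (simp add: rhaly_def norm_mult power_mult_distrib)

lemma rhaly_diff: "rhaly \<alpha> f - rhaly \<alpha> g = rhaly \<alpha> (f - g)"
  by (auto simp: rhaly_def fun_eq_iff sum_subtractf right_diff_distrib)

lemma sum_rhaly_tail_le:
  assumes small: "\<And>m. M \<le> m \<Longrightarrow> (sigma \<alpha> m)\<^sup>2 \<le> \<epsilon>"
  shows "(\<Sum>k=2^M..K. (cmod (rhaly \<alpha> d k))\<^sup>2) \<le> 8 * sqrt 2 * \<epsilon> * (\<Sum>j\<le>K. (cmod (d j))\<^sup>2)"
proof -
  have "0 \<le> \<epsilon>"
    by (rule order.trans[OF zero_le_power2 small[OF order_refl]])
  define a where "a k = (cmod (\<alpha> k))\<^sup>2 * sqrt (real k + 1)" for k
  define w where "w j = sqrt (real j + 1) * (cmod (d j))\<^sup>2" for j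
  have "(\<Sum>k=2^M..K. (cmod (rhaly \<alpha> d k))\<^sup>2) \<le> (\<Sum>k=2^M..K. a k * (2 * (\<Sum>j\<le>k. w j)))"
    unfolding norm_rhaly_sq
  proof (rule sum_mono)
    fix k
    show "(cmod (\<alpha> k))\<^sup>2 * (cmod (\<Sum>j\<le>k. d j))\<^sup>2 \<le> a k * (2 * (\<Sum>j\<le>k. w j))"
      using mult_left_mono[OF norm_sum_sq_le_weighted[of d k], of "(cmod (\<alpha> k))\<^sup>2"]
      by (simp add: a_def w_def mult_ac)
  qed
  also have "\<dots> = 2 * (\<Sum>k=2^M..K. a k * (\<Sum>j\<le>k. w j))"
    by (simp add: sum_distrib_left mult_ac)
  also have "\<dots> = 2 * (\<Sum>j\<le>K. w j * (\<Sum>k=max j (2^M)..K. a k))"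
    by (simp only: sum_mult_partial_sums_swap)
  also have "\<dots> \<le> 2 * (\<Sum>j\<le>K. w j * (4 * sqrt 2 * \<epsilon> / sqrt (real j + 1)))"
  proof (rule mult_left_mono, rule sum_mono)
    fix j
    have "(\<Sum>k=max j (2^M)..K. a k) \<le> 4 * sqrt 2 * \<epsilon> / sqrt (real (max j (2^M)) + 1)"
      unfolding a_def by (intro sum_tail_le[where M = M] small) auto
    also have "\<dots> \<le> 4 * sqrt 2 * \<epsilon> / sqrt (real j + 1)"
      using \<open>0 \<le> \<epsilon>\<close> by (intro divide_left_mono real_sqrt_le_mono) auto
    finally show "w j * (\<Sum>k=max j (2^M)..K. a k) \<le> w j * (4 * sqrt 2 * \<epsilon> / sqrt (real j + 1))"
      by (intro mult_left_mono) (auto simp: w_def)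
  qed simp
  also have "\<dots> = 8 * sqrt 2 * \<epsilon> * (\<Sum>j\<le>K. (cmod (d j))\<^sup>2)"
    by (simp add: w_def sum_distrib_left mult_ac)
  finally show ?thesis .
qed

lemma sum_rhaly_le:
  assumes small: "\<And>m. M \<le> m \<Longrightarrow> (sigma \<alpha> m)\<^sup>2 \<le> \<epsilon>"
  shows "(\<Sum>k\<le>K. (cmod (rhaly \<alpha> d k))\<^sup>2)
           \<le> (\<Sum>k<2^M. (cmod (rhaly \<alpha> d k))\<^sup>2) + 8 * sqrt 2 * \<epsilon> * (\<Sum>j\<le>K. (cmod (d j))\<^sup>2)"
proof -
  have "(\<Sum>k\<le>K. (cmod (rhaly \<alpha> d k))\<^sup>2) \<le> (\<Sum>k\<in>{..<2^M} \<union> {2^M..K}. (cmod (rhaly \<alpha> d k))\<^sup>2)"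
    by (intro sum_mono2) auto
  also have "\<dots> = (\<Sum>k<2^M. (cmod (rhaly \<alpha> d k))\<^sup>2) + (\<Sum>k=2^M..K. (cmod (rhaly \<alpha> d k))\<^sup>2)"
    by (intro sum.union_disjoint) auto
  moreover have "(\<Sum>k=2^M..K. (cmod (rhaly \<alpha> d k))\<^sup>2) \<le> 8 * sqrt 2 * \<epsilon> * (\<Sum>j\<le>K. (cmod (d j))\<^sup>2)"
    by (rule sum_rhaly_tail_le[OF small])
  ultimately show ?thesis
    by linarith
qed

lemma in_l2_rhaly:
  assumes bounded: "\<And>m. (sigma \<alpha> m)\<^sup>2 \<le> E" and "in_l2 d"
  shows "in_l2 (rhaly \<alpha> d)"
proof (rule in_l2_if_partial_sums_bounded)
  fix K
  have "0 \<le> E"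
    by (rule order.trans[OF zero_le_power2 bounded])
  have "(\<Sum>k\<le>K. (cmod (rhaly \<alpha> d k))\<^sup>2)
      \<le> (\<Sum>k<2^0. (cmod (rhaly \<alpha> d k))\<^sup>2) + 8 * sqrt 2 * E * (\<Sum>j\<le>K. (cmod (d j))\<^sup>2)"
    using bounded by (intro sum_rhaly_le)
  also have "\<dots> = (cmod (\<alpha> 0))\<^sup>2 * (\<Sum>j\<in>{0}. (cmod (d j))\<^sup>2) + 8 * sqrt 2 * E * (\<Sum>j\<le>K. (cmod (d j))\<^sup>2)"
    by (simp add: norm_rhaly_sq)
  also have "\<dots> \<le> (cmod (\<alpha> 0))\<^sup>2 * (l2_norm d)\<^sup>2 + 8 * sqrt 2 * E * (l2_norm d)\<^sup>2"
    using \<open>0 \<le> E\<close> \<open>in_l2 d\<close>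
    by (intro add_mono mult_left_mono sum_le_l2_norm_sq) auto
  finally show "(\<Sum>k\<le>K. (cmod (rhaly \<alpha> d k))\<^sup>2)
      \<le> (cmod (\<alpha> 0))\<^sup>2 * (l2_norm d)\<^sup>2 + 8 * sqrt 2 * E * (l2_norm d)\<^sup>2" .
qed

section \<open>Compactness when sigma tends to zero\<close>

lemma sigma_sq_eventually_le:
  assumes "sigma \<alpha> \<longlonglongrightarrow> 0" "0 < \<epsilon>"
  obtains M where "\<And>m. M \<le> m \<Longrightarrow> (sigma \<alpha> m)\<^sup>2 \<le> \<epsilon>"
proof -
  have "(\<lambda>m. (sigma \<alpha> m)\<^sup>2) \<longlonglongrightarrow> 0"
    using tendsto_power[OF assms(1), of 2] by simp
  then have "eventually (\<lambda>m. (sigma \<alpha> m)\<^sup>2 < \<epsilon>) sequentially"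
    using assms(2) by (rule order_tendstoD)
  then obtain N where "\<And>m. N \<le> m \<Longrightarrow> (sigma \<alpha> m)\<^sup>2 < \<epsilon>"
    by (auto simp: eventually_sequentially)
  then show thesis
    by (intro that[of N]) (simp add: less_imp_le)
qed

lemma sigma_sq_bounded:
  assumes "sigma \<alpha> \<longlonglongrightarrow> 0"
  obtains E where "\<And>m. (sigma \<alpha> m)\<^sup>2 \<le> E"
proof -
  obtain K where K: "\<And>m. norm (sigma \<alpha> m) \<le> K"
    using convergent_imp_Bseq[OF convergentI[OF assms]] by (auto simp: Bseq_def)
  have "(sigma \<alpha> m)\<^sup>2 \<le> K\<^sup>2" for m
    using K[of m] sigma_nonneg[of \<alpha> m] by (intro power_mono) auto
  then show thesis
    using that by blast
qed

lemma l2_norm_rhaly_sq_le: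
  assumes small: "\<And>m. M \<le> m \<Longrightarrow> (sigma \<alpha> m)\<^sup>2 \<le> \<epsilon>"
    and "in_l2 (rhaly \<alpha> d)" and bounded: "\<And>K. (\<Sum>j\<le>K. (cmod (d j))\<^sup>2) \<le> C"
  shows "(l2_norm (rhaly \<alpha> d))\<^sup>2 \<le> (\<Sum>k<2^M. (cmod (rhaly \<alpha> d k))\<^sup>2) + 8 * sqrt 2 * \<epsilon> * C"
proof (rule l2_norm_sq_le[OF \<open>in_l2 (rhaly \<alpha> d)\<close>])
  fix K
  have "0 \<le> \<epsilon>"
    by (rule order.trans[OF zero_le_power2 small[OF order_refl]])
  have "(\<Sum>k\<le>K. (cmod (rhaly \<alpha> d k))\<^sup>2)
      \<le> (\<Sum>k<2^M. (cmod (rhaly \<alpha> d k))\<^sup>2) + 8 * sqrt 2 * \<epsilon> * (\<Sum>j\<le>K. (cmod (d j))\<^sup>2)"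
    by (rule sum_rhaly_le[OF small])
  also have "\<dots> \<le> (\<Sum>k<2^M. (cmod (rhaly \<alpha> d k))\<^sup>2) + 8 * sqrt 2 * \<epsilon> * C"
    using \<open>0 \<le> \<epsilon>\<close> by (intro add_left_mono mult_left_mono bounded) auto
  finally show "(\<Sum>k\<le>K. (cmod (rhaly \<alpha> d k))\<^sup>2)
      \<le> (\<Sum>k<2^M. (cmod (rhaly \<alpha> d k))\<^sup>2) + 8 * sqrt 2 * \<epsilon> * C" .
qed

lemma rhaly_tendsto_zero:
  assumes "sigma \<alpha> \<longlonglongrightarrow> 0"
    and l2: "\<And>i. in_l2 (d i)" and bounded: "\<And>i K. (\<Sum>j\<le>K. (cmod (d i j))\<^sup>2) \<le> C"
    and coordinatewise: "\<And>j. (\<lambda>i. d i j) \<longlonglongrightarrow> 0"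
  shows "(\<lambda>i. l2_norm (rhaly \<alpha> (d i))) \<longlonglongrightarrow> 0"
proof -
  obtain E where "\<And>m. (sigma \<alpha> m)\<^sup>2 \<le> E"
    using sigma_sq_bounded[OF assms(1)] by blast
  then have Rl2: "in_l2 (rhaly \<alpha> (d i))" for i
    using in_l2_rhaly l2 by blast
  have "0 \<le> C"
    using bounded[of 0 0] by (meson order.trans sum_nonneg zero_le_power2)
  have "(\<lambda>i. (l2_norm (rhaly \<alpha> (d i)))\<^sup>2) \<longlonglongrightarrow> 0"
  proof (rule LIMSEQ_I)
    fix e :: real assume "0 < e"
    define \<epsilon> where "\<epsilon> = e / (16 * sqrt 2 * (C + 1))"
    have "0 < \<epsilon>"
      using \<open>0 < e\<close> \<open>0 \<le> C\<close> by (simp add: \<epsilon>_def)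
    have "8 * sqrt 2 * \<epsilon> * C = e / 2 * (C / (C + 1))"
      using \<open>0 \<le> C\<close> by (simp add: \<epsilon>_def divide_simps)
    also have "\<dots> \<le> e / 2"
      using \<open>0 < e\<close> \<open>0 \<le> C\<close> by (intro mult_left_le) auto
    finally have tail: "8 * sqrt 2 * \<epsilon> * C \<le> e / 2" .
    obtain M where M: "\<And>m. M \<le> m \<Longrightarrow> (sigma \<alpha> m)\<^sup>2 \<le> \<epsilon>"
      using sigma_sq_eventually_le[OF assms(1) \<open>0 < \<epsilon>\<close>] by blast
    define F where "F i = (\<Sum>k<2^M. (cmod (rhaly \<alpha> (d i) k))\<^sup>2)" for i
    have "F \<longlonglongrightarrow> (\<Sum>k<2^M. (cmod (\<alpha> k * (\<Sum>j\<le>k. 0)))\<^sup>2)"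
      unfolding F_def rhaly_def by (intro tendsto_intros coordinatewise)
    then have "eventually (\<lambda>i. F i < e / 2) sequentially"
      using \<open>0 < e\<close> by (intro order_tendstoD(2)) auto
    then obtain N where N: "\<And>i. N \<le> i \<Longrightarrow> F i < e / 2"
      by (auto simp: eventually_sequentially)
    show "\<exists>N. \<forall>i\<ge>N. norm ((l2_norm (rhaly \<alpha> (d i)))\<^sup>2 - 0) < e"
    proof (intro exI allI impI)
      fix i assume "N \<le> i"
      then show "norm ((l2_norm (rhaly \<alpha> (d i)))\<^sup>2 - 0) < e"
        using l2_norm_rhaly_sq_le[where M = M and d = "d i", OF M Rl2 bounded] N[of i] tail
        by (simp add: F_def)
    qed
  qed
  then have "(\<lambda>i. sqrt ((l2_norm (rhaly \<alpha> (d i)))\<^sup>2)) \<longlonglongrightarrow> sqrt 0"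
    by (rule tendsto_real_sqrt)
  then show ?thesis
    using l2_norm_nonneg[OF Rl2] by simp
qed

lemma coordinatewise_convergent_subseq:
  fixes x :: "nat \<Rightarrow> nat \<Rightarrow> 'a::heine_borel"
  assumes "\<And>j. bounded (range (\<lambda>n. x n j))"
  shows "\<exists>r. strict_mono r \<and> (\<forall>j. convergent (\<lambda>n. x (r n) j))"
proof -
  interpret subseqs "\<lambda>j s. convergent (\<lambda>n. x (s n) j)"
  proof unfold_locales
    fix j and s :: "nat \<Rightarrow> nat"
    have "range (\<lambda>n. x (s n) j) \<subseteq> range (\<lambda>n. x n j)"
      by auto
    then have "bounded (range (\<lambda>n. x (s n) j))"
      by (rule bounded_subset[OF assms])
    then obtain l r where "strict_mono r" "((\<lambda>n. x (s n) j) \<circ> r) \<longlonglongrightarrow> l"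
      using bounded_imp_convergent_subsequence by blast
    then show "\<exists>r'. strict_mono r' \<and> convergent (\<lambda>n. x ((s \<circ> r') n) j)"
      by (auto simp: convergent_def o_def)
  qed
  have "convergent (\<lambda>n. x (diagseq n) j)" for j
  proof -
    have "convergent (\<lambda>n. x ((diagseq \<circ> (+) (Suc j)) n) j)"
    proof (rule diagseq_holds)
      fix r s k assume r: "strict_mono (r :: nat \<Rightarrow> nat)" and "convergent (\<lambda>n. x (s n) k)"
      then obtain l where "(\<lambda>n. x (s n) k) \<longlonglongrightarrow> l"
        by (auto simp: convergent_def)
      from LIMSEQ_subseq_LIMSEQ[OF this r] show "convergent (\<lambda>n. x ((s \<circ> r) n) k)"
        by (auto simp: convergent_def o_def)
    qed
    moreover have "(diagseq \<circ> (+) (Suc j)) n = diagseq (n + Suc j)" for n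
      by (simp add: add.commute)
    ultimately show ?thesis
      using convergent_ignore_initial_segment[of "\<lambda>n. x (diagseq n) j" "Suc j"] by simp
  qed
  then show ?thesis
    using subseq_diagseq by blast
qed

lemma l2_bounded_coordinatewise_convergent_subseq:
  fixes x :: "nat \<Rightarrow> nat \<Rightarrow> complex"
  assumes l2: "\<And>n. in_l2 (x n)" and bounded: "\<And>n. l2_norm (x n) \<le> B"
  obtains r y where "strict_mono r" "in_l2 y" "\<And>j. (\<lambda>n. x (r n) j) \<longlonglongrightarrow> y j"
    "\<And>K. (\<Sum>j\<le>K. (cmod (y j))\<^sup>2) \<le> B\<^sup>2"
proof -
  have partial: "(\<Sum>j\<in>A. (cmod (x n j))\<^sup>2) \<le> B\<^sup>2" if "finite A" for n A
    using sum_le_l2_norm_sq[OF l2 that, of n] power_mono[OF bounded l2_norm_nonneg[OF l2], of n 2]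
    by linarith
  have "cmod (x n j) \<le> B" for n j
    using norm_le_l2_norm[OF l2, of n j] bounded[of n] by linarith
  then have "bounded (range (\<lambda>n. x n j))" for j
    unfolding bounded_iff by auto
  then obtain r where r: "strict_mono r" "\<And>j. convergent (\<lambda>n. x (r n) j)"
    using coordinatewise_convergent_subseq[of x] by blast
  define y where "y j = lim (\<lambda>n. x (r n) j)" for j
  have lim: "(\<lambda>n. x (r n) j) \<longlonglongrightarrow> y j" for j
    using r(2) unfolding y_def convergent_LIMSEQ_iff by blast
  have y_partial: "(\<Sum>j\<le>K. (cmod (y j))\<^sup>2) \<le> B\<^sup>2" for K
  proof (rule LIMSEQ_le_const2)
    show "(\<lambda>n. \<Sum>j\<le>K. (cmod (x (r n) j))\<^sup>2) \<longlonglongrightarrow> (\<Sum>j\<le>K. (cmod (y j))\<^sup>2)"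
      by (intro tendsto_intros lim)
    show "\<exists>N. \<forall>n\<ge>N. (\<Sum>j\<le>K. (cmod (x (r n) j))\<^sup>2) \<le> B\<^sup>2"
      using partial by blast
  qed
  show thesis
    using that[OF r(1) in_l2_if_partial_sums_bounded[OF y_partial] lim y_partial] .
qed

theorem sigma_tendsto_zero_imp_compact_op_l2_rhaly:
  assumes "sigma \<alpha> \<longlonglongrightarrow> 0"
  shows "compact_op_l2 (rhaly \<alpha>)"
proof -
  obtain E where E: "\<And>m. (sigma \<alpha> m)\<^sup>2 \<le> E"
    using sigma_sq_bounded[OF assms] by blast
  show ?thesis
    unfolding compact_op_l2_def
  proof (intro conjI allI impI)
    show "in_l2 f \<Longrightarrow> in_l2 (rhaly \<alpha> f)" for f
      by (rule in_l2_rhaly[OF E])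
  next
    fix x :: "nat \<Rightarrow> nat \<Rightarrow> complex"
    assume "(\<forall>n. in_l2 (x n)) \<and> (\<exists>B. \<forall>n. l2_norm (x n) \<le> B)"
    then obtain B where l2: "\<And>n. in_l2 (x n)" and bounded: "\<And>n. l2_norm (x n) \<le> B"
      by blast
    obtain r y where r: "strict_mono r" and "in_l2 y" and lim: "\<And>j. (\<lambda>n. x (r n) j) \<longlonglongrightarrow> y j"
      and y_partial: "\<And>K. (\<Sum>j\<le>K. (cmod (y j))\<^sup>2) \<le> B\<^sup>2"
      using l2_bounded_coordinatewise_convergent_subseq[of x B] l2 bounded by blast
    define d where "d n = x (r n) - y" for n
    have d_partial: "(\<Sum>j\<le>K. (cmod (d n j))\<^sup>2) \<le> 4 * B\<^sup>2" for n K
      unfolding d_def by (rule sum_diff_sq_le[OF l2 bounded y_partial])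
    have d_lim: "(\<lambda>n. d n j) \<longlonglongrightarrow> 0" for j
      using LIM_zero[OF lim[of j]] by (simp add: d_def)
    have d_l2: "in_l2 (d n)" for n
      unfolding d_def using l2[of "r n"] \<open>in_l2 y\<close> by (rule in_l2_diff)
    have "(\<lambda>n. l2_norm (rhaly \<alpha> (d n))) \<longlonglongrightarrow> 0"
      by (rule rhaly_tendsto_zero[OF assms d_l2 d_partial d_lim])
    then have "(\<lambda>n. l2_norm (rhaly \<alpha> (x (r n)) - rhaly \<alpha> y)) \<longlonglongrightarrow> 0"
      by (simp add: rhaly_diff d_def)
    then show "\<exists>r g. strict_mono r \<and> in_l2 g \<and> (\<lambda>n. l2_norm (rhaly \<alpha> (x (r n)) - g)) \<longlonglongrightarrow> 0"
      using r in_l2_rhaly[OF E \<open>in_l2 y\<close>] by blast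
  qed
qed

section \<open>Decay of sigma for compact Rhaly operators\<close>

lemma LIMSEQ_if_every_subseq_has_LIMSEQ_subseq:
  fixes X :: "nat \<Rightarrow> 'a::metric_space"
  assumes "\<And>r :: nat \<Rightarrow> nat. strict_mono r \<Longrightarrow>
             \<exists>r' :: nat \<Rightarrow> nat. strict_mono r' \<and> (X \<circ> r \<circ> r') \<longlonglongrightarrow> L"
  shows "X \<longlonglongrightarrow> L"
proof (rule ccontr)
  assume "\<not> X \<longlonglongrightarrow> L"
  then obtain e where "0 < e" and "\<forall>N. \<exists>n\<ge>N. e \<le> dist (X n) L"
    unfolding lim_sequentially by (auto simp: not_less)
  then have "infinite {n. e \<le> dist (X n) L}"
    by (simp add: infinite_nat_iff_unbounded_le)
  then obtain r :: "nat \<Rightarrow> nat" where "strict_mono r" and far: "\<And>n. e \<le> dist (X (r n)) L"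
    using infinite_enumerate by blast
  obtain r' where "(X \<circ> r \<circ> r') \<longlonglongrightarrow> L"
    using assms[OF \<open>strict_mono r\<close>] by blast
  then obtain N where "dist ((X \<circ> r \<circ> r') N) L < e"
    using \<open>0 < e\<close> unfolding lim_sequentially by blast
  then show False
    using far[of "r' N"] by simp
qed

lemma compact_op_l2_coordinatewise_null_imp_norm_null:
  fixes x :: "nat \<Rightarrow> nat \<Rightarrow> complex"
  assumes T: "compact_op_l2 T"
    and l2: "\<And>n. in_l2 (x n)" and bounded: "\<And>n. l2_norm (x n) \<le> B"
    and coordinatewise: "\<And>j. (\<lambda>n. T (x n) j) \<longlonglongrightarrow> 0"
  shows "(\<lambda>n. l2_norm (T (x n))) \<longlonglongrightarrow> 0"
proof (rule LIMSEQ_if_every_subseq_has_LIMSEQ_subseq)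
  fix r :: "nat \<Rightarrow> nat"
  assume "strict_mono r"
  have "(\<forall>n. in_l2 (x (r n))) \<and> (\<exists>B. \<forall>n. l2_norm (x (r n)) \<le> B)"
    using l2 bounded by blast
  then obtain r' g where "strict_mono r'" "in_l2 g"
    and conv: "(\<lambda>n. l2_norm (T (x (r (r' n))) - g)) \<longlonglongrightarrow> 0"
    using T[unfolded compact_op_l2_def, THEN conjunct2, rule_format, of "\<lambda>n. x (r n)"] by blast
  have Tl2: "in_l2 (T (x n))" for n
    using T l2 unfolding compact_op_l2_def by blast
  have "g j = 0" for j
  proof -
    have "cmod (T (x (r (r' n))) j - g j) \<le> l2_norm (T (x (r (r' n))) - g)" for n
      using norm_le_l2_norm[OF in_l2_diff[OF Tl2 \<open>in_l2 g\<close>], of "r (r' n)" j] by simp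
    then have "(\<lambda>n. T (x (r (r' n))) j - g j) \<longlonglongrightarrow> 0"
      by (intro Lim_null_comparison[OF _ conv]) simp
    then have "(\<lambda>n. T (x (r (r' n))) j) \<longlonglongrightarrow> g j"
      by (rule LIM_zero_cancel)
    moreover have "(\<lambda>n. T (x (r (r' n))) j) \<longlonglongrightarrow> 0"
      using LIMSEQ_subseq_LIMSEQ[OF coordinatewise strict_mono_o[OF \<open>strict_mono r\<close> \<open>strict_mono r'\<close>]]
      by (simp add: o_def)
    ultimately show ?thesis
      by (rule LIMSEQ_unique)
  qed
  then have "T (x (r (r' n))) - g = T (x (r (r' n)))" for n
    by (simp add: fun_eq_iff)
  then show "\<exists>r'. strict_mono r' \<and> ((\<lambda>n. l2_norm (T (x n))) \<circ> r \<circ> r') \<longlonglongrightarrow> 0"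
    using \<open>strict_mono r'\<close> conv by (auto simp: o_def)
qed

definition block_vector :: "nat \<Rightarrow> nat \<Rightarrow> complex" where
  "block_vector k j = (if j < 2^k then of_real (1 / sqrt (2^k)) else 0)"

lemma sum_block_vector:
  "(\<Sum>i\<le>j. block_vector k i) = of_real (real (min (j + 1) (2^k)) / sqrt (2^k))"
proof -
  have "(\<Sum>i\<le>j. block_vector k i) = (\<Sum>i\<in>{i\<in>{..j}. i < 2^k}. of_real (1 / sqrt (2^k)))"
    unfolding block_vector_def by (rule sum.inter_filter[symmetric]) simp
  also have "{i\<in>{..j}. i < 2^k} = {..<min (j + 1) (2^k)}"
    by auto
  finally show ?thesis
    by simp
qed

lemma in_l2_block_vector: "in_l2 (block_vector k)"
  unfolding in_l2_def by (rule summable_finite[of "{..<2^k}"]) (auto simp: block_vector_def)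

lemma l2_norm_block_vector: "l2_norm (block_vector k) = 1"
proof -
  have "(\<Sum>j. (cmod (block_vector k j))\<^sup>2) = (\<Sum>j<2^k. (cmod (block_vector k j))\<^sup>2)"
    by (rule suminf_finite) (auto simp: block_vector_def)
  also have "\<dots> = 1"
    by (simp add: block_vector_def norm_divide power_divide)
  finally show ?thesis
    by (simp add: l2_norm_def)
qed

lemma rhaly_block_vector_tendsto_zero: "(\<lambda>k. rhaly \<alpha> (block_vector k) j) \<longlonglongrightarrow> 0"
proof -
  have "(\<lambda>k. \<alpha> j * of_real ((real j + 1) / sqrt 2 ^ k)) \<longlonglongrightarrow> \<alpha> j * of_real 0"
    by (intro tendsto_intros LIMSEQ_divide_realpow_zero) simp
  moreover have "eventually
      (\<lambda>k. \<alpha> j * of_real ((real j + 1) / sqrt 2 ^ k) = rhaly \<alpha> (block_vector k) j) sequentially"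
    using eventually_ge_at_top[of j]
  proof eventually_elim
    case (elim k)
    then have "j + 1 \<le> 2^k"
      using less_exp[of j] power_increasing[of j k "2::nat"] by linarith
    then show ?case
      by (simp add: rhaly_def sum_block_vector min_def real_sqrt_power add.commute)
  qed
  ultimately show ?thesis
    by (simp add: Lim_transform_eventually)
qed

lemma sigma_le_rhaly_block_vector:
  assumes "in_l2 (rhaly \<alpha> (block_vector k))"
  shows "sigma \<alpha> k \<le> sqrt 2 * l2_norm (rhaly \<alpha> (block_vector k))"
proof -
  have "real (j + 1) * (cmod (\<alpha> j))\<^sup>2 / 2 \<le> (cmod (rhaly \<alpha> (block_vector k) j))\<^sup>2"
    if "j \<in> {2^k..<2^(k+1)}" for j
  proof -
    have "(\<Sum>i\<le>j. block_vector k i) = of_real (sqrt (2^k))"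
      using that by (simp add: sum_block_vector min_def real_div_sqrt)
    then have "(cmod (rhaly \<alpha> (block_vector k) j))\<^sup>2 = (cmod (\<alpha> j))\<^sup>2 * 2^k"
      by (simp add: norm_rhaly_sq)
    moreover have "real (j + 1) \<le> real (2 * 2^k)"
      using that by (simp only: of_nat_le_iff) simp
    ultimately have "real (j + 1) * (cmod (\<alpha> j))\<^sup>2 \<le> 2 * (cmod (rhaly \<alpha> (block_vector k) j))\<^sup>2"
      using mult_right_mono[of "real (j + 1)" "2 * 2^k" "(cmod (\<alpha> j))\<^sup>2"] by (simp add: mult_ac)
    then show ?thesis
      by simp
  qed
  then have "(sigma \<alpha> k)\<^sup>2 / 2 \<le> (\<Sum>j=2^k..<2^(k+1). (cmod (rhaly \<alpha> (block_vector k) j))\<^sup>2)"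
    unfolding sigma_sq sum_divide_distrib by (rule sum_mono)
  also have "\<dots> \<le> (l2_norm (rhaly \<alpha> (block_vector k)))\<^sup>2"
    using assms by (rule sum_le_l2_norm_sq) simp
  finally have "(sigma \<alpha> k)\<^sup>2 \<le> (sqrt 2 * l2_norm (rhaly \<alpha> (block_vector k)))\<^sup>2"
    by (simp add: power_mult_distrib)
  moreover have "0 \<le> sqrt 2 * l2_norm (rhaly \<alpha> (block_vector k))"
    using l2_norm_nonneg[OF assms] by simp
  ultimately show ?thesis
    by (rule power2_le_imp_le)
qed

theorem compact_op_l2_rhaly_imp_sigma_tendsto_zero:
  assumes "compact_op_l2 (rhaly \<alpha>)"
  shows "sigma \<alpha> \<longlonglongrightarrow> 0"
proof -
  have Rl2: "in_l2 (rhaly \<alpha> (block_vector k))" for k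
    using assms in_l2_block_vector unfolding compact_op_l2_def by blast
  have "(\<lambda>k. l2_norm (rhaly \<alpha> (block_vector k))) \<longlonglongrightarrow> 0"
    by (rule compact_op_l2_coordinatewise_null_imp_norm_null[where B = 1])
       (simp_all add: assms in_l2_block_vector l2_norm_block_vector rhaly_block_vector_tendsto_zero)
  then have "(\<lambda>k. sqrt 2 * l2_norm (rhaly \<alpha> (block_vector k))) \<longlonglongrightarrow> 0"
    by (rule tendsto_mult_right_zero)
  then show ?thesis
    by (rule tendsto_sandwich[rotated 2, OF tendsto_const])
       (simp_all add: sigma_nonneg sigma_le_rhaly_block_vector[OF Rl2])
qed

theorem theorem2p7:
  fixes \<alpha> :: "nat \<Rightarrow> complex"
  assumes "in_l2 \<alpha>"
  shows "compact_op_l2 (rhaly \<alpha>) \<longleftrightarrow> (sigma \<alpha> \<longlonglongrightarrow> 0)"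
  using compact_op_l2_rhaly_imp_sigma_tendsto_zero sigma_tendsto_zero_imp_compact_op_l2_rhaly by blast

end
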